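(* Let $p$ be a probability density on $(0,\infty)$, $m>0$, $0<t<T$ with $m(T-t)>1$, and $P_{tT}>0$. Define $$S(t,y)=P_{tT}\frac{N(y)}{D(y)},\quad N(y)=\int_y^\infty p(x)x^{2-mT}(x-y)^{m(T-t)-1}dx,\quad D(y)=\int_y^\infty p(x)x^{1-mT}(x-y)^{m(T-t)-1}dx .$$ Let $I\subset[0,\infty)$ be an open interval such that for all $y\in I$: $\int_y^\infty p(x)\,dx>0$; the integrals $\int_y^\infty p(x)x^{j-mT}(x-y)^{m(T-t)-i}dx$ are finite for $j\in\{1,2,3\}$, $i\in\{0,1,2\}$; and $N$, $D$ are differentiable on $I$ with derivatives obtained by differentiating under the integral sign. Then $$\frac{\partial S(t,y)}{\partial y}=P_{tT}\,[m(T-t)-1]\left(\frac{\int_y^\infty p\,\alpha^2\,dx\int_y^\infty p\,\beta^2\,dx}{\big(\int_y^\infty p\,\alpha\beta\,dx\big)^2}-1\right)>0\quad (y\in I),$$ where $\alpha^2(x)=x^{1-mT}(x-y)^{m(T-t)}$ and $\beta^2(x)=x^{1-mT}(x-y)^{m(T-t)-2}$ for $x>y$; in particular $S(t,\cdot)$ is strictly increasing on $I$. *)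

theory Defs
  imports "HOL-Analysis.Analysis"
begin

definition Nfun :: "(real \<Rightarrow> real) \<Rightarrow> real \<Rightarrow> real \<Rightarrow> real \<Rightarrow> real \<Rightarrow> real" where
  "Nfun p m T t y =
     (LINT x:{y<..}|lborel. p x * x powr (2 - m * T) * (x - y) powr (m * (T - t) - 1))"

definition Dfun :: "(real \<Rightarrow> real) \<Rightarrow> real \<Rightarrow> real \<Rightarrow> real \<Rightarrow> real \<Rightarrow> real" where
  "Dfun p m T t y =
     (LINT x:{y<..}|lborel. p x * x powr (1 - m * T) * (x - y) powr (m * (T - t) - 1))"

definition Sfun :: "real \<Rightarrow> (real \<Rightarrow> real) \<Rightarrow> real \<Rightarrow> real \<Rightarrow> real \<Rightarrow> real \<Rightarrow> real" where
  "Sfun P p m T t y = P * Nfun p m T t y / Dfun p m T t y"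

definition alpha :: "real \<Rightarrow> real \<Rightarrow> real \<Rightarrow> real \<Rightarrow> real \<Rightarrow> real" where
  "alpha m T t y x = sqrt (x powr (1 - m * T) * (x - y) powr (m * (T - t)))"

definition beta :: "real \<Rightarrow> real \<Rightarrow> real \<Rightarrow> real \<Rightarrow> real \<Rightarrow> real" where
  "beta m T t y x = sqrt (x powr (1 - m * T) * (x - y) powr (m * (T - t) - 2))"

end

theory Submission
  imports Defs
begin

(*
  All integrals involved are "kernel moments"
    M(j,i)(y) = \<integral>_{x>y} p x * x^(j - mT) * (x - y)^(m(T-t) - i) dx ,
  so that N = M(2,1), D = M(1,1), N' = -(m(T-t)-1) M(2,2), D' = -(m(T-t)-1) M(1,2).
  Writing x = (x - y) + y gives the recurrence M(j+1,i) = M(j,i-1) + y M(j,i); with it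
  the quotient rule collapses to
    S' = P (m(T-t) - 1) (M(1,0) M(1,2) / M(1,1)^2 - 1).
  Its positivity is a strict Cauchy-Schwarz inequality M(1,1)^2 < M(1,0) M(1,2): the
  integrals are the moments of order 0, 1, 2 of the variable x - y with respect to the
  weight p x * x^(1-mT) * (x-y)^(m(T-t)-2), and a nonzero weight cannot be concentrated
  at a single point. The quantities A, B, C of the theorem are M(1,0), M(1,2), M(1,1)
  rewritten through the square roots alpha and beta.
*)

section \<open>Strict positivity and strict Cauchy-Schwarz for weighted integrals\<close>

text \<open>A nonnegative weight of positive mass integrated against a function that is
  positive except at one point gives a positive integral (a point is a null set).\<close>

lemma set_integral_pos_off_point:
  fixes p g :: "real \<Rightarrow> real" and A :: "real set" and c :: real
  assumes int_pg: "set_integrable lborel A (\<lambda>x. p x * g x)"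
    and int_p: "set_integrable lborel A p"
    and p_nonneg: "\<And>x. x \<in> A \<Longrightarrow> p x \<ge> 0"
    and g_nonneg: "\<And>x. x \<in> A \<Longrightarrow> g x \<ge> 0"
    and g_pos: "\<And>x. x \<in> A \<Longrightarrow> x \<noteq> c \<Longrightarrow> g x > 0"
    and mass: "(LINT x:A|lborel. p x) > 0"
  shows "(LINT x:A|lborel. p x * g x) > 0"
proof -
  let ?f = "\<lambda>x. indicator A x *\<^sub>R (p x * g x)"
  have f_int: "integrable lborel ?f"
    using int_pg by (simp add: set_integrable_def)
  have f_nonneg: "AE x in lborel. 0 \<le> ?f x"
    by (auto simp: indicator_def intro!: mult_nonneg_nonneg p_nonneg g_nonneg)
  have "(LINT x:A|lborel. p x * g x) \<noteq> 0"
  proof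
    assume "(LINT x:A|lborel. p x * g x) = 0"
    then have "AE x in lborel. ?f x = 0"
      using integral_nonneg_eq_0_iff_AE[OF f_int f_nonneg]
      by (simp add: set_lebesgue_integral_def)
    then have p_zero: "AE x in lborel. indicator A x *\<^sub>R p x = 0"
      using AE_lborel_singleton[of c]
    proof eventually_elim
      case (elim x)
      then show ?case using g_pos[of x] by (auto simp: indicator_def)
    qed
    have "(\<lambda>x. indicator A x *\<^sub>R p x) \<in> borel_measurable lborel"
      using int_p unfolding set_integrable_def by (rule borel_measurable_integrable)
    then have "(LINT x:A|lborel. p x) = 0"
      unfolding set_lebesgue_integral_def using integral_cong_AE[OF _ _ p_zero] by simp
    with mass show False by simp
  qed
  moreover have "(LINT x:A|lborel. p x * g x) \<ge> 0"
    unfolding set_lebesgue_integral_def using integral_nonneg_AE[OF f_nonneg] .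
  ultimately show ?thesis by simp
qed

text \<open>Strict Cauchy-Schwarz for the moments of an injective variable \<open>u\<close> with respect
  to the weight \<open>p * g\<close>: since \<open>u\<close> is not a.e. constant, its variance is positive,
  i.e. \<open>M\<^sub>1\<^sup>2 < M\<^sub>0 M\<^sub>2\<close>.\<close>

lemma set_integral_moments_strict_cauchy_schwarz:
  fixes p g u :: "real \<Rightarrow> real" and A :: "real set"
  assumes int_p: "set_integrable lborel A p"
    and p_nonneg: "\<And>x. x \<in> A \<Longrightarrow> p x \<ge> 0"
    and mass: "(LINT x:A|lborel. p x) > 0"
    and g_pos: "\<And>x. x \<in> A \<Longrightarrow> g x > 0"
    and u_inj: "inj_on u A"
    and int0: "set_integrable lborel A (\<lambda>x. p x * g x)"
    and int1: "set_integrable lborel A (\<lambda>x. p x * g x * u x)"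
    and int2: "set_integrable lborel A (\<lambda>x. p x * g x * (u x)\<^sup>2)"
  shows "(LINT x:A|lborel. p x * g x * u x)\<^sup>2
           < (LINT x:A|lborel. p x * g x) * (LINT x:A|lborel. p x * g x * (u x)\<^sup>2)"
proof -
  define M0 where "M0 = (LINT x:A|lborel. p x * g x)"
  define M1 where "M1 = (LINT x:A|lborel. p x * g x * u x)"
  define M2 where "M2 = (LINT x:A|lborel. p x * g x * (u x)\<^sup>2)"
  define c where "c = M1 / M0"
  have M0_pos: "M0 > 0"
    unfolding M0_def
    by (rule set_integral_pos_off_point[where c = 0]) (use assms in \<open>auto intro: less_imp_le\<close>)
  obtain x0 where x0: "\<And>x. x \<in> A \<Longrightarrow> u x = c \<Longrightarrow> x = x0"
    using u_inj unfolding inj_on_def by metis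
  have expand: "p x * (g x * (u x - c)\<^sup>2)
      = p x * g x * (u x)\<^sup>2 - 2 * c * (p x * g x * u x) + c\<^sup>2 * (p x * g x)" for x
    by (simp add: power2_eq_square algebra_simps)
  have int_var: "set_integrable lborel A (\<lambda>x. p x * (g x * (u x - c)\<^sup>2))"
    unfolding expand using int0 int1 int2 by auto
  have "(LINT x:A|lborel. p x * (g x * (u x - c)\<^sup>2)) > 0"
  proof (rule set_integral_pos_off_point[where c = x0, OF int_var int_p p_nonneg _ _ mass])
    fix x assume "x \<in> A"
    then show "g x * (u x - c)\<^sup>2 \<ge> 0" using g_pos[of x] by simp
    assume "x \<noteq> x0"
    with \<open>x \<in> A\<close> have "u x \<noteq> c" using x0 by blast
    then show "g x * (u x - c)\<^sup>2 > 0" using g_pos[OF \<open>x \<in> A\<close>] by simp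
  qed
  also have "(LINT x:A|lborel. p x * (g x * (u x - c)\<^sup>2)) = M2 - 2 * c * M1 + c\<^sup>2 * M0"
    unfolding expand M0_def M1_def M2_def using int0 int1 int2 by simp
  finally have "M0 * (M2 - 2 * c * M1 + c\<^sup>2 * M0) > 0"
    using M0_pos by simp
  moreover have "M0 * (M2 - 2 * c * M1 + c\<^sup>2 * M0) = M0 * M2 - M1\<^sup>2"
    using M0_pos by (simp add: c_def field_simps power2_eq_square)
  ultimately show ?thesis
    by (simp add: M0_def M1_def M2_def)
qed

section \<open>Kernel moments\<close>

text \<open>The integrand of the moment \<open>M(j,i)\<close> with exponents \<open>a = mT\<close> and \<open>k = m(T-t)\<close>.\<close>

definition moment_kernel ::
    "(real \<Rightarrow> real) \<Rightarrow> real \<Rightarrow> real \<Rightarrow> real \<Rightarrow> real \<Rightarrow> real \<Rightarrow> real \<Rightarrow> real" where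
  "moment_kernel p a k j i y x = p x * x powr (j - a) * (x - y) powr (k - i)"

definition moment ::
    "(real \<Rightarrow> real) \<Rightarrow> real \<Rightarrow> real \<Rightarrow> real \<Rightarrow> real \<Rightarrow> real \<Rightarrow> real" where
  "moment p a k j i y = (LINT x:{y<..}|lborel. moment_kernel p a k j i y x)"

lemma Nfun_eq_moment: "Nfun p m T t y = moment p (m * T) (m * (T - t)) 2 1 y"
  by (simp add: Nfun_def moment_def moment_kernel_def)

lemma Dfun_eq_moment: "Dfun p m T t y = moment p (m * T) (m * (T - t)) 1 1 y"
  by (simp add: Dfun_def moment_def moment_kernel_def)

lemma powr_add_one: "z > 0 \<Longrightarrow> z powr (b + 1) = z powr b * z" for z b :: real
  by (simp add: powr_add)

text \<open>The recurrence \<open>M(j+1,i) = M(j,i-1) + y M(j,i)\<close>, obtained from \<open>x = (x - y) + y\<close>.\<close>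

lemma moment_recurrence:
  assumes y_nonneg: "y \<ge> 0"
    and int_lower: "set_integrable lborel {y<..} (moment_kernel p a k j (i - 1) y)"
    and int_same: "set_integrable lborel {y<..} (moment_kernel p a k j i y)"
  shows "moment p a k (j + 1) i y = moment p a k j (i - 1) y + y * moment p a k j i y"
proof -
  have split: "moment_kernel p a k (j + 1) i y x
      = moment_kernel p a k j (i - 1) y x + y * moment_kernel p a k j i y x" if "x > y" for x
  proof -
    have exponents: "j + 1 - a = (j - a) + 1" "k - (i - 1) = (k - i) + 1" by simp_all
    have x_split: "x powr (j + 1 - a) = x powr (j - a) * x"
      and xy_split: "(x - y) powr (k - (i - 1)) = (x - y) powr (k - i) * (x - y)"
      unfolding exponents using powr_add_one that y_nonneg by simp_all
    show ?thesis
      unfolding moment_kernel_def x_split xy_split by (simp add: algebra_simps)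
  qed
  have "moment p a k (j + 1) i y
      = (LINT x:{y<..}|lborel. moment_kernel p a k j (i - 1) y x + y * moment_kernel p a k j i y x)"
    unfolding moment_def by (rule set_lebesgue_integral_cong) (auto simp: split)
  also have "\<dots> = moment p a k j (i - 1) y + y * moment p a k j i y"
    unfolding moment_def using int_lower int_same by simp
  finally show ?thesis .
qed

text \<open>The moments \<open>M(1,0), M(1,1), M(1,2)\<close> are the moments of order 2, 1, 0 of \<open>x - y\<close>
  for the weight \<open>p x * x^(1-a) * (x-y)^(k-2)\<close>; hence \<open>M(1,1) > 0\<close> and
  \<open>M(1,1)\<^sup>2 < M(1,0) M(1,2)\<close>.\<close>

lemma moment_strict_cauchy_schwarz:
  fixes p :: "real \<Rightarrow> real"
  assumes y_nonneg: "y \<ge> 0"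
    and p_nonneg: "\<And>x. x > y \<Longrightarrow> p x \<ge> 0"
    and int_p: "set_integrable lborel {y<..} p"
    and mass: "(LINT x:{y<..}|lborel. p x) > 0"
    and int0: "set_integrable lborel {y<..} (moment_kernel p a k 1 0 y)"
    and int1: "set_integrable lborel {y<..} (moment_kernel p a k 1 1 y)"
    and int2: "set_integrable lborel {y<..} (moment_kernel p a k 1 2 y)"
  shows "moment p a k 1 1 y > 0"
    and "(moment p a k 1 1 y)\<^sup>2 < moment p a k 1 0 y * moment p a k 1 2 y"
proof -
  define g where "g x = x powr (1 - a) * (x - y) powr (k - 2)" for x
  have g_pos: "g x > 0" if "x \<in> {y<..}" for x
    using that y_nonneg by (simp add: g_def)
  have kernel_eq: "moment_kernel p a k 1 2 y x = p x * g x"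
      "moment_kernel p a k 1 1 y x = p x * g x * (x - y)"
      "moment_kernel p a k 1 0 y x = p x * g x * (x - y)\<^sup>2" if "x \<in> {y<..}" for x
  proof -
    have "(x - y) powr (k - 1) = (x - y) powr (k - 2) * (x - y)"
      "(x - y) powr k = (x - y) powr (k - 1) * (x - y)"
      using powr_add_one[of "x - y" "k - 2"] powr_add_one[of "x - y" "k - 1"] that by simp_all
    then show "moment_kernel p a k 1 2 y x = p x * g x"
      "moment_kernel p a k 1 1 y x = p x * g x * (x - y)"
      "moment_kernel p a k 1 0 y x = p x * g x * (x - y)\<^sup>2"
      by (simp_all add: moment_kernel_def g_def power2_eq_square mult_ac)
  qed
  have moment_eq: "moment p a k 1 2 y = (LINT x:{y<..}|lborel. p x * g x)"
      "moment p a k 1 1 y = (LINT x:{y<..}|lborel. p x * g x * (x - y))"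
      "moment p a k 1 0 y = (LINT x:{y<..}|lborel. p x * g x * (x - y)\<^sup>2)"
    unfolding moment_def by (auto intro: set_lebesgue_integral_cong simp: kernel_eq)
  have int_g: "set_integrable lborel {y<..} (\<lambda>x. p x * g x)"
      "set_integrable lborel {y<..} (\<lambda>x. p x * g x * (x - y))"
      "set_integrable lborel {y<..} (\<lambda>x. p x * g x * (x - y)\<^sup>2)"
  proof -
    have "set_integrable lborel {y<..} (moment_kernel p a k 1 2 y)
          = set_integrable lborel {y<..} (\<lambda>x. p x * g x)"
        "set_integrable lborel {y<..} (moment_kernel p a k 1 1 y)
          = set_integrable lborel {y<..} (\<lambda>x. p x * g x * (x - y))"
        "set_integrable lborel {y<..} (moment_kernel p a k 1 0 y)
          = set_integrable lborel {y<..} (\<lambda>x. p x * g x * (x - y)\<^sup>2)"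
      by (rule set_integrable_cong; simp add: kernel_eq)+
    with int0 int1 int2 show "set_integrable lborel {y<..} (\<lambda>x. p x * g x)"
      "set_integrable lborel {y<..} (\<lambda>x. p x * g x * (x - y))"
      "set_integrable lborel {y<..} (\<lambda>x. p x * g x * (x - y)\<^sup>2)"
      by simp_all
  qed
  have "(LINT x:{y<..}|lborel. p x * (g x * (x - y))) > 0"
    by (rule set_integral_pos_off_point[where c = y])
       (use int_g(2) int_p p_nonneg g_pos mass in \<open>auto simp: mult.assoc intro: less_imp_le\<close>)
  then show "moment p a k 1 1 y > 0"
    unfolding moment_eq by (simp add: mult.assoc)
  show "(moment p a k 1 1 y)\<^sup>2 < moment p a k 1 0 y * moment p a k 1 2 y"
    using set_integral_moments_strict_cauchy_schwarz[OF int_p _ mass g_pos _ int_g]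
      p_nonneg by (simp add: moment_eq inj_on_def mult.commute)
qed

section \<open>The derivative of S\<close>

text \<open>Quotient rule plus the moment recurrence: the derivative of \<open>S = P N / D\<close> equals
  \<open>P (k - 1) (M(1,0) M(1,2) / M(1,1)\<^sup>2 - 1)\<close> with \<open>k = m(T-t)\<close>.\<close>

lemma Sfun_has_derivative:
  fixes p :: "real \<Rightarrow> real" and m T t P y :: real
  defines "M \<equiv> moment p (m * T) (m * (T - t))"
  assumes y_nonneg: "y \<ge> 0"
    and int0: "set_integrable lborel {y<..} (moment_kernel p (m * T) (m * (T - t)) 1 0 y)"
    and int1: "set_integrable lborel {y<..} (moment_kernel p (m * T) (m * (T - t)) 1 1 y)"
    and int2: "set_integrable lborel {y<..} (moment_kernel p (m * T) (m * (T - t)) 1 2 y)"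
    and D_nonzero: "M 1 1 y \<noteq> 0"
    and N_deriv: "(Nfun p m T t has_real_derivative - (m * (T - t) - 1) * M 2 2 y) (at y)"
    and D_deriv: "(Dfun p m T t has_real_derivative - (m * (T - t) - 1) * M 1 2 y) (at y)"
  shows "(Sfun P p m T t has_real_derivative
           P * (m * (T - t) - 1) * (M 1 0 y * M 1 2 y / (M 1 1 y)\<^sup>2 - 1)) (at y)"
proof -
  have N_rec: "M 2 1 y = M 1 0 y + y * M 1 1 y"
    using int0 int1 moment_recurrence[OF y_nonneg, of p "m * T" "m * (T - t)" 1 1] by (simp add: M_def)
  have N'_rec: "M 2 2 y = M 1 1 y + y * M 1 2 y"
    using int1 int2 moment_recurrence[OF y_nonneg, of p "m * T" "m * (T - t)" 1 2] by (simp add: M_def)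
  have "Sfun P p m T t = (\<lambda>y. P * Nfun p m T t y / Dfun p m T t y)"
    by (simp add: Sfun_def fun_eq_iff)
  then have "(Sfun P p m T t has_real_derivative
      (P * (- (m * (T - t) - 1) * M 2 2 y) * M 1 1 y - P * M 2 1 y * (- (m * (T - t) - 1) * M 1 2 y))
        / (M 1 1 y * M 1 1 y)) (at y)"
    using DERIV_divide[OF DERIV_cmult[OF N_deriv] D_deriv] D_nonzero
    by (simp add: Nfun_eq_moment Dfun_eq_moment M_def)
  then show ?thesis
    unfolding N_rec N'_rec using D_nonzero by (simp add: field_simps power2_eq_square)
qed

lemma alpha_beta_moments:
  fixes p :: "real \<Rightarrow> real" and m T t y :: real
  defines "M \<equiv> moment p (m * T) (m * (T - t))"
  shows "(LINT x:{y<..}|lborel. p x * (alpha m T t y x)\<^sup>2) = M 1 0 y"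
    and "(LINT x:{y<..}|lborel. p x * (beta m T t y x)\<^sup>2) = M 1 2 y"
    and "(LINT x:{y<..}|lborel. p x * (alpha m T t y x * beta m T t y x)) = M 1 1 y"
proof -
  have alpha_beta: "alpha m T t y x * beta m T t y x
      = x powr (1 - m * T) * (x - y) powr (m * (T - t) - 1)" if "x > y" for x
  proof -
    let ?k = "m * (T - t)"
    have "(x - y) powr ?k * (x - y) powr (?k - 2) = ((x - y) powr (?k - 1))\<^sup>2"
      using powr_add_one[of "x - y" "?k - 2"] powr_add_one[of "x - y" "?k - 1"] that
      by (simp add: power2_eq_square)
    then have "alpha m T t y x * beta m T t y x
        = sqrt ((x powr (1 - m * T) * (x - y) powr (?k - 1))\<^sup>2)"
      unfolding alpha_def beta_def real_sqrt_mult[symmetric]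
      by (simp add: power2_eq_square mult_ac)
    then show ?thesis by simp
  qed
  show "(LINT x:{y<..}|lborel. p x * (alpha m T t y x)\<^sup>2) = M 1 0 y"
    "(LINT x:{y<..}|lborel. p x * (beta m T t y x)\<^sup>2) = M 1 2 y"
    "(LINT x:{y<..}|lborel. p x * (alpha m T t y x * beta m T t y x)) = M 1 1 y"
    unfolding M_def moment_def
    by (auto intro!: set_lebesgue_integral_cong simp only: alpha_beta)
       (simp_all add: moment_kernel_def alpha_def beta_def mult.assoc)
qed

lemma strict_mono_on_if_pos_deriv:
  fixes f :: "real \<Rightarrow> real" and I :: "real set"
  assumes I_interval: "is_interval I"
    and deriv_pos: "\<And>y. y \<in> I \<Longrightarrow> \<exists>D. (f has_real_derivative D) (at y) \<and> D > 0"
  shows "strict_mono_on I f"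
proof (rule strict_mono_onI)
  fix r s assume r: "r \<in> I" and s: "s \<in> I" and "r < s"
  from \<open>r < s\<close> show "f r < f s"
  proof (rule DERIV_pos_imp_increasing)
    fix x assume "r \<le> x" "x \<le> s"
    then have "x \<in> I" using I_interval r s unfolding is_interval_1 by blast
    then show "\<exists>D. DERIV f x :> D \<and> D > 0" by (rule deriv_pos)
  qed
qed

theorem mainTheorem13:
  fixes p :: "real \<Rightarrow> real" and m T t P :: real and I :: "real set"
  assumes p_nonneg: "\<And>x. x > 0 \<Longrightarrow> p x \<ge> 0"
    and p_int: "set_integrable lborel {0<..} p"
    and p_total: "(LINT x:{0<..}|lborel. p x) = 1"
    and m_pos: "m > 0" and t_pos: "0 < t" and tT: "t < T"
    and mTt: "m * (T - t) > 1"
    and P_pos: "P > 0"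
    and I_open: "open I" and I_interval: "is_interval I" and I_nonneg: "I \<subseteq> {0..}"
    and tail_pos: "\<And>y. y \<in> I \<Longrightarrow> (LINT x:{y<..}|lborel. p x) > 0"
    and finite_ints: "\<And>y j i. y \<in> I \<Longrightarrow> j \<in> {1, 2, 3} \<Longrightarrow> i \<in> {0, 1, 2} \<Longrightarrow>
        set_integrable lborel {y<..}
          (\<lambda>x. p x * x powr (j - m * T) * (x - y) powr (m * (T - t) - i))"
    and N_deriv: "\<And>y. y \<in> I \<Longrightarrow>
        (Nfun p m T t has_real_derivative
           (- (m * (T - t) - 1)) *
           (LINT x:{y<..}|lborel. p x * x powr (2 - m * T) * (x - y) powr (m * (T - t) - 2)))
        (at y)"
    and D_deriv: "\<And>y. y \<in> I \<Longrightarrow>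
        (Dfun p m T t has_real_derivative
           (- (m * (T - t) - 1)) *
           (LINT x:{y<..}|lborel. p x * x powr (1 - m * T) * (x - y) powr (m * (T - t) - 2)))
        (at y)"
  shows "(\<forall>y\<in>I.
           let A = (LINT x:{y<..}|lborel. p x * (alpha m T t y x)\<^sup>2);
               B = (LINT x:{y<..}|lborel. p x * (beta m T t y x)\<^sup>2);
               C = (LINT x:{y<..}|lborel. p x * (alpha m T t y x * beta m T t y x));
               S' = P * (m * (T - t) - 1) * (A * B / C\<^sup>2 - 1)
           in (Sfun P p m T t has_real_derivative S') (at y) \<and> S' > 0)
         \<and> strict_mono_on I (Sfun P p m T t)"
proof -
  let ?M = "moment p (m * T) (m * (T - t))"
  let ?S' = "\<lambda>y. P * (m * (T - t) - 1) * (?M 1 0 y * ?M 1 2 y / (?M 1 1 y)\<^sup>2 - 1)"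
  have pointwise: "(Sfun P p m T t has_real_derivative ?S' y) (at y) \<and> ?S' y > 0"
    if y: "y \<in> I" for y
  proof -
    have y_nonneg: "y \<ge> 0" using y I_nonneg by auto
    have "set_integrable lborel {y<..} (moment_kernel p (m * T) (m * (T - t)) 1 i y)"
      if "i \<in> {0, 1, 2}" for i
      using finite_ints[OF y _ that, of 1] by (simp add: moment_kernel_def[abs_def])
    then have int_kernel: "set_integrable lborel {y<..} (moment_kernel p (m * T) (m * (T - t)) 1 0 y)"
        "set_integrable lborel {y<..} (moment_kernel p (m * T) (m * (T - t)) 1 1 y)"
        "set_integrable lborel {y<..} (moment_kernel p (m * T) (m * (T - t)) 1 2 y)"
      by simp_all
    have p_tail_nonneg: "\<And>x. x > y \<Longrightarrow> p x \<ge> 0" using p_nonneg y_nonneg by simp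
    have int_p: "set_integrable lborel {y<..} p"
      by (rule set_integrable_subset[OF p_int]) (use y_nonneg in auto)
    note CS = moment_strict_cauchy_schwarz[OF y_nonneg p_tail_nonneg int_p tail_pos[OF y] int_kernel]
    have "(Sfun P p m T t has_real_derivative ?S' y) (at y)"
      using Sfun_has_derivative[OF y_nonneg int_kernel] CS(1) N_deriv[OF y] D_deriv[OF y]
      by (simp add: moment_def moment_kernel_def)
    moreover have "?M 1 0 y * ?M 1 2 y / (?M 1 1 y)\<^sup>2 > 1"
      using CS by (simp add: field_simps)
    ultimately show ?thesis using P_pos mTt by simp
  qed
  then show ?thesis
    using strict_mono_on_if_pos_deriv[OF I_interval] by (auto simp: Let_def alpha_beta_moments)
qed

end
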